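(* Let $(u_S,u_R)$ be an environment satisfying scant-indifferences. If $(\sigma,\rho)$ is a cheap-talk equilibrium with $U_S(\sigma,\rho)$ equal to the persuasion payoff and $\rho$ is pure-on-path, then there exist a partitional messaging strategy $\hat\sigma$ and a pure action strategy $\hat\rho$ such that $|M_{\hat\sigma}|\le|A|$, $(\hat\sigma,\hat\rho)$ is a cheap-talk equilibrium, and $U_S(\hat\sigma,\hat\rho)$ equals the persuasion payoff.
   Context: $A=\{a_1,\dots,a_{|A|}\}$ and $\Omega$ are finite nonempty sets, $\mu_0$ a prior on $\Omega$ with $\mu_0(\omega)>0$ for all $\omega$, $M$ a finite message set with $|M|>\max\{|\Omega|,|A|\}$. An environment is a pair of functions $u_S,u_R:A\times\Omega\to[0,1]$. A messaging strategy is $\sigma:\Omega\to\Delta M$; an action strategy is $\rho:M\to\Delta A$; $\rho$ is pure if each $\rho(\cdot|m)$ is degenerate, and pure-on-path (given $\sigma$) if $\rho(\cdot|m)$ is degenerate for every $m\in M_\sigma=\{m:\sigma(m|\omega)>0\text{ for some }\omega\}$. $U_i(\sigma,\rho)=\sum_{\omega,m,a}\mu_0(\omega)\sigma(m|\omega)\rho(a|m)u_i(a,\omega)$. $(\sigma,\rho)$ is S-BR if $\sigma\in\arg\max_{\sigma'}U_S(\sigma',\rho)$, R-BR if $\rho\in\arg\max_{\rho'}U_R(\sigma,\rho')$; a cheap-talk equilibrium is both. The persuasion payoff is the maximum of $U_S$ over R-BR profiles. $\sigma$ is partitional if for every $\omega$ some $m$ has $\sigma(m|\omega)=1$. Scant-indifferences: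 with $\mathbf u_S(a)=u_S(a,\cdot)\in\mathbb R^{|\Omega|}$, $\mathbf u_R(a)=u_R(a,\cdot)$, for each $i$ the expanded-indifference matrix $T^i$ has $|\Omega|$ columns and rows $\mathbf u_S(a_j)-\mathbf u_S(a_i)$ ($j\ne i$), $\mathbf u_R(a_j)-\mathbf u_R(a_i)$ ($j\ne i$), and the rows of the $|\Omega|\times|\Omega|$ identity; the environment satisfies scant-indifferences if for each $i$ every matrix obtained from $T^i$ by deleting some rows has full rank. *)

theory Defs
  imports "HOL-Analysis.Analysis" "HOL-Probability.Probability_Mass_Function"
begin

text \<open>A messaging strategy is 'w \<Rightarrow> 'm pmf, an action strategy is 'm \<Rightarrow> 'a pmf.\<close>

definition environment :: "('a \<Rightarrow> 'w \<Rightarrow> real) \<Rightarrow> ('a \<Rightarrow> 'w \<Rightarrow> real) \<Rightarrow> bool" where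
  "environment uS uR \<longleftrightarrow> (\<forall>a w. 0 \<le> uS a w \<and> uS a w \<le> 1 \<and> 0 \<le> uR a w \<and> uR a w \<le> 1)"

definition payoff :: "'w pmf \<Rightarrow> ('a \<Rightarrow> 'w \<Rightarrow> real) \<Rightarrow> ('w::finite \<Rightarrow> 'm::finite pmf)
    \<Rightarrow> ('m \<Rightarrow> 'a::finite pmf) \<Rightarrow> real" where
  "payoff mu0 u \<sigma> \<rho> =
     (\<Sum>w\<in>UNIV. \<Sum>m\<in>UNIV. \<Sum>a\<in>UNIV. pmf mu0 w * pmf (\<sigma> w) m * pmf (\<rho> m) a * u a w)"

definition S_BR :: "'w pmf \<Rightarrow> ('a \<Rightarrow> 'w \<Rightarrow> real) \<Rightarrow> ('w::finite \<Rightarrow> 'm::finite pmf)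
    \<Rightarrow> ('m \<Rightarrow> 'a::finite pmf) \<Rightarrow> bool" where
  "S_BR mu0 uS \<sigma> \<rho> \<longleftrightarrow> (\<forall>\<sigma>'. payoff mu0 uS \<sigma>' \<rho> \<le> payoff mu0 uS \<sigma> \<rho>)"

definition R_BR :: "'w pmf \<Rightarrow> ('a \<Rightarrow> 'w \<Rightarrow> real) \<Rightarrow> ('w::finite \<Rightarrow> 'm::finite pmf)
    \<Rightarrow> ('m \<Rightarrow> 'a::finite pmf) \<Rightarrow> bool" where
  "R_BR mu0 uR \<sigma> \<rho> \<longleftrightarrow> (\<forall>\<rho>'. payoff mu0 uR \<sigma> \<rho>' \<le> payoff mu0 uR \<sigma> \<rho>)"

definition cheap_talk_eq :: "'w pmf \<Rightarrow> ('a \<Rightarrow> 'w \<Rightarrow> real) \<Rightarrow> ('a \<Rightarrow> 'w \<Rightarrow> real)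
    \<Rightarrow> ('w::finite \<Rightarrow> 'm::finite pmf) \<Rightarrow> ('m \<Rightarrow> 'a::finite pmf) \<Rightarrow> bool" where
  "cheap_talk_eq mu0 uS uR \<sigma> \<rho> \<longleftrightarrow> S_BR mu0 uS \<sigma> \<rho> \<and> R_BR mu0 uR \<sigma> \<rho>"

text \<open>Persuasion payoff: the maximum of U_S over R-BR profiles (written as a supremum;
  the set is nonempty and bounded, and the maximum is attained).\<close>
definition persuasion_payoff :: "'w pmf \<Rightarrow> ('a \<Rightarrow> 'w \<Rightarrow> real) \<Rightarrow> ('a \<Rightarrow> 'w \<Rightarrow> real)
    \<Rightarrow> ('w::finite \<Rightarrow> 'm::finite pmf) itself \<Rightarrow> ('m \<Rightarrow> 'a::finite pmf) itself \<Rightarrow> real" where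
  "persuasion_payoff mu0 uS uR _ _ =
     Sup {payoff mu0 uS \<sigma> \<rho> | (\<sigma> :: 'w \<Rightarrow> 'm pmf) (\<rho> :: 'm \<Rightarrow> 'a pmf). R_BR mu0 uR \<sigma> \<rho>}"

definition on_path :: "('w::finite \<Rightarrow> 'm pmf) \<Rightarrow> 'm set" where
  "on_path \<sigma> = {m. \<exists>w. pmf (\<sigma> w) m > 0}"

definition pure_strategy :: "('m \<Rightarrow> 'a pmf) \<Rightarrow> bool" where
  "pure_strategy \<rho> \<longleftrightarrow> (\<forall>m. \<exists>a. \<rho> m = return_pmf a)"

definition pure_on_path :: "('w::finite \<Rightarrow> 'm pmf) \<Rightarrow> ('m \<Rightarrow> 'a pmf) \<Rightarrow> bool" where
  "pure_on_path \<sigma> \<rho> \<longleftrightarrow> (\<forall>m\<in>on_path \<sigma>. \<exists>a. \<rho> m = return_pmf a)"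

definition partitional :: "('w \<Rightarrow> 'm pmf) \<Rightarrow> bool" where
  "partitional \<sigma> \<longleftrightarrow> (\<forall>w. \<exists>m. pmf (\<sigma> w) m = 1)"

text \<open>Rows of the expanded-indifference matrix T^i, indexed by
  Inl (j, True)  : u_S(a_j) - u_S(a_i),  j \<noteq> i
  Inl (j, False) : u_R(a_j) - u_R(a_i),  j \<noteq> i
  Inr w          : the w-th row of the identity.\<close>
fun T_row :: "('a \<Rightarrow> 'w \<Rightarrow> real) \<Rightarrow> ('a \<Rightarrow> 'w \<Rightarrow> real) \<Rightarrow> 'a
    \<Rightarrow> ('a \<times> bool) + 'w \<Rightarrow> real ^ ('w::finite)" where
  "T_row uS uR i (Inl (j, True)) = (\<chi> w. uS j w - uS i w)"
| "T_row uS uR i (Inl (j, False)) = (\<chi> w. uR j w - uR i w)"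
| "T_row uS uR i (Inr w) = axis w 1"

definition T_rows :: "'a \<Rightarrow> (('a \<times> bool) + 'w) set" where
  "T_rows i = {Inl (j, b) | j b. j \<noteq> i} \<union> range Inr"

text \<open>A matrix whose rows are the family (T_row i r) for r in R has full rank iff its rank
  (the dimension of its row space) equals min (number of rows) (number of columns).\<close>
definition scant_indifferences :: "('a \<Rightarrow> 'w \<Rightarrow> real) \<Rightarrow> ('a \<Rightarrow> 'w::finite \<Rightarrow> real) \<Rightarrow> bool" where
  "scant_indifferences uS uR \<longleftrightarrow>
     (\<forall>i. \<forall>R \<subseteq> T_rows i.
        dim (span (T_row uS uR i ` R)) = min (card R) CARD('w))"

end

theory Submission
  imports Defs
begin

text \<open>Scant-indifferences makes the sender strictly rank any two actions in every state. Hence,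
  in an equilibrium that is pure on path, all messages sent in a state \<open>w\<close> induce the same
  action \<open>act w\<close>, and no state prefers the action induced in another state. Replacing every
  message by a direct recommendation of \<open>act w\<close> preserves all payoffs and the sender's
  incentives; the receiver cannot gain either, since any response to the recommendations can be
  replicated against the original messages, which are finer.\<close>

lemma scant_indifferences_sender_inj:
  fixes uS uR :: "'a \<Rightarrow> 'w::finite \<Rightarrow> real"
  assumes "scant_indifferences uS uR"
  shows "inj (\<lambda>a. uS a w)"
proof (rule injI, rule ccontr)
  fix j i
  assume indiff: "uS j w = uS i w" and "j \<noteq> i"
  let ?R = "insert (Inl (j, True)) (Inr ` (UNIV - {w}))"
  have "?R \<subseteq> T_rows i"
    using \<open>j \<noteq> i\<close> by (auto simp: T_rows_def)
  then have "dim (span (T_row uS uR i ` ?R)) = min (card ?R) CARD('w)"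
    using assms unfolding scant_indifferences_def by blast
  moreover have "card ?R = CARD('w)"
    by (subst card_insert_disjoint)
      (auto simp: card_image card_Diff_singleton finite_UNIV_card_ge_0)
  ultimately have "dim (span (T_row uS uR i ` ?R)) = DIM(real ^ 'w)"
    by simp
  then have full: "span (T_row uS uR i ` ?R) = UNIV"
    by (simp only: dim_span dim_eq_full)
  \<comment> \<open>yet all chosen rows vanish in coordinate \<open>w\<close>, so they cannot span \<open>axis w 1\<close>\<close>
  have "span (T_row uS uR i ` ?R) \<subseteq> {x. x $ w = 0}"
    by (rule span_minimal) (auto simp: indiff axis_def subspace_def)
  then have "axis w (1::real) $ w = 0"
    using full by blast
  then show False
    by (simp add: axis_def)
qed

definition response_utility ::
    "('a \<Rightarrow> 'w \<Rightarrow> real) \<Rightarrow> ('m \<Rightarrow> 'a::finite pmf) \<Rightarrow> 'm \<Rightarrow> 'w \<Rightarrow> real" where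
  "response_utility u \<rho> m w = (\<Sum>a\<in>UNIV. pmf (\<rho> m) a * u a w)"

lemma sum_pmf_mult_return: "(\<Sum>x\<in>UNIV. pmf (return_pmf b) x * g x) = g (b::'b::finite)"
  by (simp add: indicator_def)

lemma response_utility_return:
  "\<rho> m = return_pmf a \<Longrightarrow> response_utility u \<rho> m w = u a w"
  by (simp add: response_utility_def sum_pmf_mult_return)

lemma sum_pmf_mult_const_on_support:
  fixes p :: "'m::finite pmf"
  assumes "\<And>m. pmf p m > 0 \<Longrightarrow> v m = c"
  shows "(\<Sum>m\<in>UNIV. pmf p m * v m) = c"
proof -
  have "(\<Sum>m\<in>UNIV. pmf p m * v m) = (\<Sum>m\<in>UNIV. pmf p m * c)"
    using assms by (intro sum.cong) (auto simp: order_less_le)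
  also have "\<dots> = c"
    by (simp add: sum_distrib_right[symmetric] sum_pmf_eq_1)
  finally show ?thesis .
qed

lemma sum_weighted_le_imp_eq:
  fixes p f g :: "'i \<Rightarrow> real"
  assumes "finite I" "\<forall>k\<in>I. 0 \<le> p k" "\<forall>k\<in>I. f k \<le> g k"
    and "(\<Sum>k\<in>I. p k * g k) \<le> (\<Sum>k\<in>I. p k * f k)"
    and "i \<in> I" "p i > 0"
  shows "f i = g i"
proof (rule ccontr)
  assume "f i \<noteq> g i"
  with assms have "p i * f i < p i * g i"
    by (simp add: order_less_le)
  then have "\<exists>k\<in>I. p k * f k < p k * g k"
    using \<open>i \<in> I\<close> by blast
  moreover have "\<forall>k\<in>I. p k * f k \<le> p k * g k"
    using assms(2,3) by (simp add: mult_left_mono)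
  ultimately have "(\<Sum>k\<in>I. p k * f k) < (\<Sum>k\<in>I. p k * g k)"
    by (intro sum_strict_mono_ex1[OF \<open>finite I\<close>]) auto
  with assms(4) show False by simp
qed

lemma payoff_eq_response_utility:
  "payoff mu0 u \<sigma> \<rho> =
     (\<Sum>w\<in>UNIV. pmf mu0 w * (\<Sum>m\<in>UNIV. pmf (\<sigma> w) m * response_utility u \<rho> m w))"
  unfolding payoff_def response_utility_def by (simp add: sum_distrib_left mult.assoc)

lemma payoff_return_pmf:
  "payoff mu0 u (\<lambda>w. return_pmf (s w)) \<rho> = (\<Sum>w\<in>UNIV. pmf mu0 w * response_utility u \<rho> (s w) w)"
  by (simp add: payoff_eq_response_utility sum_pmf_mult_return)

lemma on_path_return_pmf: "on_path (\<lambda>w. return_pmf (s w)) = range s"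
  by (auto simp: on_path_def indicator_def split: if_splits)

lemma partitional_return_pmf: "partitional (\<lambda>w. return_pmf (s w))"
  unfolding partitional_def by (metis indicator_simps(1) pmf_return singletonI)

lemma payoff_induced_action:
  assumes "\<And>w m. pmf (\<sigma> w) m > 0 \<Longrightarrow> \<rho> m = return_pmf (act w)"
  shows "payoff mu0 u \<sigma> \<rho> = (\<Sum>w\<in>UNIV. pmf mu0 w * u (act w) w)"
  unfolding payoff_eq_response_utility
  by (intro sum.cong refl arg_cong2[where f = "(*)"] sum_pmf_mult_const_on_support)
    (simp add: assms response_utility_return)

lemma payoff_garbling:
  assumes "\<And>w m. pmf (\<sigma> w) m > 0 \<Longrightarrow> k m = s w"
  shows "payoff mu0 u \<sigma> (\<lambda>m. \<rho> (k m)) = payoff mu0 u (\<lambda>w. return_pmf (s w)) \<rho>"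
  unfolding payoff_return_pmf payoff_eq_response_utility
  by (intro sum.cong refl arg_cong2[where f = "(*)"] sum_pmf_mult_const_on_support)
    (simp add: assms response_utility_def)

lemma S_BR_pointwise_best:
  fixes s :: "'w::finite \<Rightarrow> 'm::finite" and \<rho> :: "'m \<Rightarrow> 'a::finite pmf"
  assumes "\<And>w m. response_utility uS \<rho> m w \<le> response_utility uS \<rho> (s w) w"
  shows "S_BR mu0 uS (\<lambda>w. return_pmf (s w)) \<rho>"
  unfolding S_BR_def payoff_return_pmf payoff_eq_response_utility
proof
  fix \<sigma>' :: "'w \<Rightarrow> 'm pmf"
  have "(\<Sum>m\<in>UNIV. pmf (\<sigma>' w) m * response_utility uS \<rho> m w)
      \<le> response_utility uS \<rho> (s w) w" for w
  proof -
    have "(\<Sum>m\<in>UNIV. pmf (\<sigma>' w) m * response_utility uS \<rho> m w)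
        \<le> (\<Sum>m\<in>UNIV. pmf (\<sigma>' w) m * response_utility uS \<rho> (s w) w)"
      by (intro sum_mono mult_left_mono assms) simp
    then show ?thesis
      by (simp add: sum_pmf_mult_const_on_support)
  qed
  then show "(\<Sum>w\<in>UNIV. pmf mu0 w * (\<Sum>m\<in>UNIV. pmf (\<sigma>' w) m * response_utility uS \<rho> m w))
      \<le> (\<Sum>w\<in>UNIV. pmf mu0 w * response_utility uS \<rho> (s w) w)"
    by (intro sum_mono mult_left_mono) simp_all
qed

lemma S_BR_on_path_optimal:
  fixes \<sigma> :: "'w::finite \<Rightarrow> 'm::finite pmf" and \<rho> :: "'m \<Rightarrow> 'a::finite pmf"
  assumes prior: "\<forall>w. pmf mu0 w > 0" and br: "S_BR mu0 uS \<sigma> \<rho>"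
    and sent: "pmf (\<sigma> w) m > 0"
  shows "response_utility uS \<rho> m' w \<le> response_utility uS \<rho> m w"
proof -
  define V where "V w m = response_utility uS \<rho> m w" for w m
  define Mx where "Mx w = Max (range (V w))" for w
  have V_le: "V w m \<le> Mx w" for w m
    unfolding Mx_def by (rule Max_ge) auto
  have "\<exists>m. V w m = Mx w" for w
  proof -
    have "Mx w \<in> range (V w)"
      unfolding Mx_def by (rule Max_in) auto
    then show ?thesis
      by auto
  qed
  then obtain best where best: "\<And>w. V w (best w) = Mx w"
    by metis
  define E where "E w = (\<Sum>m\<in>UNIV. pmf (\<sigma> w) m * V w m)" for w
  have E_le: "E w \<le> Mx w" for w
  proof -
    have "E w \<le> (\<Sum>m\<in>UNIV. pmf (\<sigma> w) m * Mx w)"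
      unfolding E_def by (intro sum_mono mult_left_mono V_le) simp
    then show ?thesis
      by (simp add: sum_pmf_mult_const_on_support)
  qed
  have "payoff mu0 uS (\<lambda>w. return_pmf (best w)) \<rho> \<le> payoff mu0 uS \<sigma> \<rho>"
    using br by (simp add: S_BR_def)
  then have "(\<Sum>w\<in>UNIV. pmf mu0 w * Mx w) \<le> (\<Sum>w\<in>UNIV. pmf mu0 w * E w)"
    by (simp add: payoff_return_pmf payoff_eq_response_utility E_def V_def best[symmetric])
  then have "E w = Mx w"
    using prior E_le by (intro sum_weighted_le_imp_eq[where I = UNIV]) auto
  then have "(\<Sum>m\<in>UNIV. pmf (\<sigma> w) m * Mx w) \<le> (\<Sum>m\<in>UNIV. pmf (\<sigma> w) m * V w m)"
    by (simp add: E_def sum_pmf_mult_const_on_support)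
  then have "V w m = Mx w"
    using sent V_le by (intro sum_weighted_le_imp_eq[where I = UNIV]) auto
  then show ?thesis
    using V_le[of w m'] by (simp add: V_def)
qed

lemma equilibrium_induced_action:
  fixes \<sigma> :: "'w::finite \<Rightarrow> 'm::finite pmf" and \<rho> :: "'m \<Rightarrow> 'a::finite pmf"
  assumes prior: "\<forall>w. pmf mu0 w > 0" and scant: "scant_indifferences uS uR"
    and br: "S_BR mu0 uS \<sigma> \<rho>" and pop: "pure_on_path \<sigma> \<rho>"
  obtains act where "\<And>w m. pmf (\<sigma> w) m > 0 \<Longrightarrow> \<rho> m = return_pmf (act w)"
    and "\<And>w w'. uS (act w') w \<le> uS (act w) w"
proof -
  have pure: "\<exists>a. \<rho> m = return_pmf a" if "pmf (\<sigma> w) m > 0" for w m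
    using pop that unfolding pure_on_path_def on_path_def by blast
  have "\<exists>m. pmf (\<sigma> w) m > 0" for w
    using set_pmf_not_empty by (metis ex_in_conv pmf_positive)
  then obtain m0 where m0: "\<And>w. pmf (\<sigma> w) (m0 w) > 0"
    by metis
  have "\<exists>a. \<rho> (m0 w) = return_pmf a" for w
    using pure m0 by blast
  then obtain act where act: "\<And>w. \<rho> (m0 w) = return_pmf (act w)"
    by metis
  have "\<rho> m = return_pmf (act w)" if sent: "pmf (\<sigma> w) m > 0" for w m
  proof -
    obtain b where b: "\<rho> m = return_pmf b"
      using pure sent by blast
    have "response_utility uS \<rho> m w = response_utility uS \<rho> (m0 w) w"
      using S_BR_on_path_optimal[OF prior br sent] S_BR_on_path_optimal[OF prior br m0]
      by (meson order_antisym)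
    then have "uS b w = uS (act w) w"
      by (simp add: b act response_utility_return)
    then have "b = act w"
      using scant_indifferences_sender_inj[OF scant, of w] by (simp add: inj_def)
    then show ?thesis
      using b by simp
  qed
  moreover have "uS (act w') w \<le> uS (act w) w" for w w'
    using S_BR_on_path_optimal[OF prior br m0[of w], where m' = "m0 w'"]
    by (simp add: act response_utility_return)
  ultimately show ?thesis
    using that by blast
qed

lemma R_BR_coarsening:
  fixes \<sigma> :: "'w::finite \<Rightarrow> 'm::finite pmf" and \<rho> :: "'m \<Rightarrow> 'a::finite pmf"
    and s :: "'w \<Rightarrow> 'm'::finite" and \<rho>h :: "'m' \<Rightarrow> 'a pmf"
  assumes br: "R_BR mu0 uR \<sigma> \<rho>"
    and coarser: "\<And>w w' m. pmf (\<sigma> w) m > 0 \<Longrightarrow> pmf (\<sigma> w') m > 0 \<Longrightarrow> s w = s w'"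
    and same_payoff: "payoff mu0 uR (\<lambda>w. return_pmf (s w)) \<rho>h = payoff mu0 uR \<sigma> \<rho>"
  shows "R_BR mu0 uR (\<lambda>w. return_pmf (s w)) \<rho>h"
  unfolding R_BR_def
proof
  fix \<rho>' :: "'m' \<Rightarrow> 'a pmf"
  define k where "k m = s (SOME w. pmf (\<sigma> w) m > 0)" for m
  have "k m = s w" if "pmf (\<sigma> w) m > 0" for w m
    unfolding k_def using coarser someI[of "\<lambda>w. pmf (\<sigma> w) m > 0"] that by blast
  then have "payoff mu0 uR (\<lambda>w. return_pmf (s w)) \<rho>' = payoff mu0 uR \<sigma> (\<lambda>m. \<rho>' (k m))"
    by (simp add: payoff_garbling)
  also have "\<dots> \<le> payoff mu0 uR \<sigma> \<rho>"
    using br by (simp add: R_BR_def)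
  finally show "payoff mu0 uR (\<lambda>w. return_pmf (s w)) \<rho>'
      \<le> payoff mu0 uR (\<lambda>w. return_pmf (s w)) \<rho>h"
    using same_payoff by simp
qed

lemma direct_recommendation_equilibrium:
  fixes \<sigma> :: "'w::finite \<Rightarrow> 'm::finite pmf" and \<rho> :: "'m \<Rightarrow> 'a::finite pmf"
    and f :: "'a \<Rightarrow> 'm"
  assumes induced: "\<And>w m. pmf (\<sigma> w) m > 0 \<Longrightarrow> \<rho> m = return_pmf (act w)"
    and no_envy: "\<And>w w'. uS (act w') w \<le> uS (act w) w"
    and br: "R_BR mu0 uR \<sigma> \<rho>" and "inj f"
  obtains \<rho>h where "pure_strategy \<rho>h"
    and "cheap_talk_eq mu0 uS uR (\<lambda>w. return_pmf (f (act w))) \<rho>h"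
    and "\<And>u. payoff mu0 u (\<lambda>w. return_pmf (f (act w))) \<rho>h = payoff mu0 u \<sigma> \<rho>"
proof -
  \<comment> \<open>off-path messages are also answered by an action induced in some state\<close>
  define g where "g m = act (inv (\<lambda>w. f (act w)) m)" for m
  have g_f: "g (f (act w)) = act w" for w
    using f_inv_into_f[of "f (act w)" "\<lambda>w. f (act w)" UNIV] \<open>inj f\<close> by (simp add: g_def inj_eq)
  have g_no_envy: "uS (g m) w \<le> uS (act w) w" for m w
    unfolding g_def by (rule no_envy)
  define \<rho>h where "\<rho>h m = return_pmf (g m)" for m
  have "payoff mu0 u (\<lambda>w. return_pmf (f (act w))) \<rho>h
      = (\<Sum>w\<in>UNIV. pmf mu0 w * u (act w) w)" for u
    by (rule payoff_induced_action) (auto simp: \<rho>h_def g_f indicator_def split: if_splits)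
  then have same_payoff: "payoff mu0 u (\<lambda>w. return_pmf (f (act w))) \<rho>h = payoff mu0 u \<sigma> \<rho>" for u
    using payoff_induced_action[where \<sigma> = \<sigma> and \<rho> = \<rho>, OF induced] by simp
  have "S_BR mu0 uS (\<lambda>w. return_pmf (f (act w))) \<rho>h"
    by (rule S_BR_pointwise_best) (simp add: \<rho>h_def response_utility_return g_f g_no_envy)
  moreover have "R_BR mu0 uR (\<lambda>w. return_pmf (f (act w))) \<rho>h"
    by (rule R_BR_coarsening[OF br _ same_payoff]) (metis induced return_pmf_inj)
  moreover have "pure_strategy \<rho>h"
    unfolding pure_strategy_def \<rho>h_def by blast
  ultimately show ?thesis
    using that same_payoff unfolding cheap_talk_eq_def by blast
qed

theorem lemma5:
  fixes mu0 :: "'w::finite pmf"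
    and uS uR :: "'a::finite \<Rightarrow> 'w \<Rightarrow> real"
    and \<sigma> :: "'w \<Rightarrow> 'm::finite pmf"
    and \<rho> :: "'m \<Rightarrow> 'a pmf"
  assumes prior: "\<forall>w. pmf mu0 w > 0"
    and msgs: "CARD('m) > max CARD('w) CARD('a)"
    and env: "environment uS uR"
    and scant: "scant_indifferences uS uR"
    and eq: "cheap_talk_eq mu0 uS uR \<sigma> \<rho>"
    and opt: "payoff mu0 uS \<sigma> \<rho> = persuasion_payoff mu0 uS uR TYPE('w \<Rightarrow> 'm pmf) TYPE('m \<Rightarrow> 'a pmf)"
    and pop: "pure_on_path \<sigma> \<rho>"
  shows "\<exists>(\<sigma>h :: 'w \<Rightarrow> 'm pmf) (\<rho>h :: 'm \<Rightarrow> 'a pmf).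
           partitional \<sigma>h \<and> pure_strategy \<rho>h \<and> card (on_path \<sigma>h) \<le> CARD('a) \<and>
           cheap_talk_eq mu0 uS uR \<sigma>h \<rho>h \<and>
           payoff mu0 uS \<sigma>h \<rho>h = persuasion_payoff mu0 uS uR TYPE('w \<Rightarrow> 'm pmf) TYPE('m \<Rightarrow> 'a pmf)"
proof -
  have S: "S_BR mu0 uS \<sigma> \<rho>" and R: "R_BR mu0 uR \<sigma> \<rho>"
    using eq unfolding cheap_talk_eq_def by auto
  obtain act where induced: "\<And>w m. pmf (\<sigma> w) m > 0 \<Longrightarrow> \<rho> m = return_pmf (act w)"
    and no_envy: "\<And>w w'. uS (act w') w \<le> uS (act w) w"
    using equilibrium_induced_action[OF prior scant S pop] by metis
  obtain f :: "'a \<Rightarrow> 'm" where "inj f"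
    using msgs card_le_inj[of "UNIV :: 'a set" "UNIV :: 'm set"] by auto
  obtain \<rho>h where "pure_strategy \<rho>h"
    and "cheap_talk_eq mu0 uS uR (\<lambda>w. return_pmf (f (act w))) \<rho>h"
    and "\<And>u. payoff mu0 u (\<lambda>w. return_pmf (f (act w))) \<rho>h = payoff mu0 u \<sigma> \<rho>"
    using direct_recommendation_equilibrium[where \<sigma> = \<sigma> and \<rho> = \<rho> and act = act]
      induced no_envy R \<open>inj f\<close> by blast
  moreover have "card (on_path (\<lambda>w. return_pmf (f (act w)))) \<le> CARD('a)"
    unfolding on_path_return_pmf
    by (metis card_image_le card_mono finite image_image order_trans subset_UNIV)
  ultimately show ?thesis
    using partitional_return_pmf opt by metis
qed

end
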